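(* Let $U$ be a $d\times d$ complex matrix, and define $\mathfrak{C}_{\mathbf{ab}}(U)=\frac{1}{d}\operatorname{tr}\big(D_{\mathbf a}^\dagger U D_{\mathbf b} U^\dagger\big)$ and $\mathfrak{D}_{\mathbf{ab}}(U)=|\mathfrak{C}_{\mathbf{ab}}(U)|^2$ for $\mathbf a,\mathbf b\in\mathbb{Z}_{d_L}^{2n}$. Then the $d^2\times d^2$ matrix $\mathfrak{D}(U)=(\mathfrak{D}_{\mathbf{ab}}(U))_{\mathbf a,\mathbf b}$ is bistochastic (nonnegative with all row sums and all column sums equal to $1$) if and only if $U$ is unitary.
   Context: Let $d_L\ge 2$ and $n\ge1$ be integers and $d=d_L^n$. On $\mathbb{C}^{d_L}$ with computational basis $\{|k\rangle\}_{k\in\mathbb{Z}_{d_L}}$, let $Z|k\rangle=\omega^k|k\rangle$, $X|k\rangle=|k+1\rangle$ (arithmetic mod $d_L$), $\omega=e^{2\pi i/d_L}$, $\tau=-e^{i\pi/d_L}$, and for $(a_1,a_2)\in\mathbb{Z}_{d_L}^2$ set $D_{(a_1,a_2)}=\tau^{a_1a_2}X^{a_1}Z^{a_2}$. For $\mathbf a=\mathbf a_1\oplus\cdots\oplus\mathbf a_n\in\mathbb{Z}_{d_L}^{2n}$ (each $\mathbf a_i\in\mathbb{Z}_{d_L}^2$), the displacement operator on $(\mathbb{C}^{d_L})^{\otimes n}\cong\mathbb{C}^d$ is $D_{\mathbf a}=D_{\mathbf a_1}\otimes\cdots\otimes D_{\mathbf a_n}$. (The case $n=1$ is the single-qudit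 Weyl–Heisenberg group.) *)

theory Defs
  imports "HOL-Library.FuncSet" "Jordan_Normal_Form.Schur_Decomposition"
begin

definition omega :: "nat \<Rightarrow> complex" where
  "omega dL = exp (2 * pi * \<i> / of_nat dL)"

definition tau :: "nat \<Rightarrow> complex" where
  "tau dL = - exp (pi * \<i> / of_nat dL)"

(* Matrix entry <j| D_(a1,a2) |k> of D_(a1,a2) = tau^(a1 a2) X^a1 Z^a2,
   with a1, a2 represented by their canonical representatives in {0..<dL}:
   X^a1 Z^a2 |k> = omega^(a2 k) |k + a1 mod dL>. *)
definition Dq_entry :: "nat \<Rightarrow> nat \<times> nat \<Rightarrow> nat \<Rightarrow> nat \<Rightarrow> complex" where
  "Dq_entry dL a j k =
     (if j = (k + fst a) mod dL
      then tau dL ^ (fst a * snd a) * omega dL ^ (snd a * k) else 0)"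

(* Digit of basis index k in {0..<dL^n} belonging to tensor factor i (i < n);
   factor 0 is the most significant digit: |k> = |k_0> (x) ... (x) |k_(n-1)>. *)
definition digit :: "nat \<Rightarrow> nat \<Rightarrow> nat \<Rightarrow> nat \<Rightarrow> nat" where
  "digit dL n i k = (k div dL ^ (n - 1 - i)) mod dL"

(* Index set Z_dL^(2n): a = a_0 (+) ... (+) a_(n-1), each a_i in Z_dL^2. *)
definition phase_points :: "nat \<Rightarrow> nat \<Rightarrow> (nat \<Rightarrow> nat \<times> nat) set" where
  "phase_points dL n = {0..<n} \<rightarrow>\<^sub>E ({0..<dL} \<times> {0..<dL})"

(* Displacement operator D_a = D_(a_0) (x) ... (x) D_(a_(n-1)) as a d x d matrix, d = dL^n. *)
definition displacement :: "nat \<Rightarrow> nat \<Rightarrow> (nat \<Rightarrow> nat \<times> nat) \<Rightarrow> complex mat" where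
  "displacement dL n a = mat (dL ^ n) (dL ^ n)
     (\<lambda>(j, k). \<Prod>i<n. Dq_entry dL (a i) (digit dL n i j) (digit dL n i k))"

definition mat_trace :: "complex mat \<Rightarrow> complex" where
  "mat_trace A = (\<Sum>i<dim_row A. A $$ (i, i))"

definition frakC :: "nat \<Rightarrow> nat \<Rightarrow> complex mat \<Rightarrow> (nat \<Rightarrow> nat \<times> nat) \<Rightarrow> (nat \<Rightarrow> nat \<times> nat) \<Rightarrow> complex" where
  "frakC dL n U a b = mat_trace (mat_adjoint (displacement dL n a) * U * displacement dL n b * mat_adjoint U)
                       / of_nat (dL ^ n)"

definition frakD :: "nat \<Rightarrow> nat \<Rightarrow> complex mat \<Rightarrow> (nat \<Rightarrow> nat \<times> nat) \<Rightarrow> (nat \<Rightarrow> nat \<times> nat) \<Rightarrow> real" where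
  "frakD dL n U a b = (cmod (frakC dL n U a b))\<^sup>2"

definition bistochastic :: "'i set \<Rightarrow> ('i \<Rightarrow> 'i \<Rightarrow> real) \<Rightarrow> bool" where
  "bistochastic I M \<longleftrightarrow>
     (\<forall>a\<in>I. \<forall>b\<in>I. M a b \<ge> 0) \<and>
     (\<forall>a\<in>I. (\<Sum>b\<in>I. M a b) = 1) \<and>
     (\<forall>b\<in>I. (\<Sum>a\<in>I. M a b) = 1)"

definition unitary_mat :: "complex mat \<Rightarrow> bool" where
  "unitary_mat U \<longleftrightarrow> (\<exists>d. U \<in> carrier_mat d d \<and>
      U * mat_adjoint U = 1\<^sub>m d \<and> mat_adjoint U * U = 1\<^sub>m d)"

end

theory Submission
  imports Defs "HOL-Number_Theory.Cong"
begin

(* The d^2 displacement operators satisfy the completeness relation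
   sum_a conj ((D_a)_p) (D_a)_q = d [p = q], so by Parseval sum_a |tr (D_a^H M)|^2 = d ||M||^2 in the
   Hilbert-Schmidt norm. Since d C_ab = tr (D_a^H (U D_b U^H)) = conj (tr (D_b^H (U^H D_a U))), the column
   and row sums of D(U) are ||U D_b U^H||^2 / d and ||U^H D_a U||^2 / d, which equal ||D||^2 / d = 1 when
   U is unitary. Conversely, unit column sums give ||U U^H||^2 = d (take b = 0) and, summing over all b
   and applying Parseval to the entries of U (x) conj U, d ||U||^4 = d^3. Then ||U||^2 = Re tr (U U^H) = d,
   so ||U U^H - 1||^2 = d - 2d + d = 0. *)

lemma dim_mat_adjoint [simp]:
  fixes A :: "complex mat"
  shows "dim_row (mat_adjoint A) = dim_col A" "dim_col (mat_adjoint A) = dim_row A"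
  by (simp_all add: mat_adjoint_def mat_of_rows_def)

lemma index_mat_adjoint [simp]:
  fixes A :: "complex mat"
  shows "i < dim_col A \<Longrightarrow> j < dim_row A \<Longrightarrow>
    mat_adjoint A $$ (i, j) = cnj (A $$ (j, i))"
  by (simp add: mat_adjoint_def mat_of_rows_index)

lemma mat_adjoint_carrier:
  "(A :: complex mat) \<in> carrier_mat m n \<Longrightarrow> mat_adjoint A \<in> carrier_mat n m"
  by (intro carrier_matI) auto

lemma mat_adjoint_adjoint: "mat_adjoint (mat_adjoint A) = (A :: complex mat)"
  by (intro eq_matI) auto

lemma mat_adjoint_mult:
  fixes A B :: "complex mat"
  assumes "A \<in> carrier_mat m k" "B \<in> carrier_mat k n"
  shows "mat_adjoint (A * B) = mat_adjoint B * mat_adjoint A"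
proof (rule eq_matI)
  fix i j
  assume "i < dim_row (mat_adjoint B * mat_adjoint A)" "j < dim_col (mat_adjoint B * mat_adjoint A)"
  with assms show "mat_adjoint (A * B) $$ (i, j) = (mat_adjoint B * mat_adjoint A) $$ (i, j)"
    by (simp add: scalar_prod_def mult.commute)
qed (use assms in auto)

lemma mat_trace_mult_comm:
  assumes "A \<in> carrier_mat m n" "B \<in> carrier_mat n m"
  shows "mat_trace (A * B) = mat_trace (B * A)"
proof -
  have "mat_trace (A * B) = (\<Sum>i<m. \<Sum>k<n. A $$ (i, k) * B $$ (k, i))"
    using assms by (simp add: mat_trace_def scalar_prod_def atLeast0LessThan)
  also have "\<dots> = (\<Sum>k<n. \<Sum>i<m. B $$ (k, i) * A $$ (i, k))"
    by (subst sum.swap) (simp add: mult.commute)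
  also have "\<dots> = mat_trace (B * A)"
    using assms by (simp add: mat_trace_def scalar_prod_def atLeast0LessThan)
  finally show ?thesis .
qed

abbreviation index_pairs :: "nat \<Rightarrow> (nat \<times> nat) set" where
  "index_pairs d \<equiv> {0..<d} \<times> {0..<d}"

definition hs_inner :: "nat \<Rightarrow> complex mat \<Rightarrow> complex mat \<Rightarrow> complex" where
  "hs_inner d A B = (\<Sum>p\<in>index_pairs d. cnj (A $$ p) * B $$ p)"

definition hs_norm_sq :: "nat \<Rightarrow> complex mat \<Rightarrow> real" where
  "hs_norm_sq d A = (\<Sum>p\<in>index_pairs d. (cmod (A $$ p))\<^sup>2)"

lemma mat_trace_adjoint_mult:
  assumes "A \<in> carrier_mat d d" "B \<in> carrier_mat d d"
  shows "mat_trace (mat_adjoint A * B) = hs_inner d A B"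
proof -
  have "mat_trace (mat_adjoint A * B) = (\<Sum>i<d. \<Sum>k<d. cnj (A $$ (k, i)) * B $$ (k, i))"
    using assms by (simp add: mat_trace_def scalar_prod_def atLeast0LessThan)
  then show ?thesis
    unfolding hs_inner_def sum.cartesian_product' by (subst sum.swap) (simp add: atLeast0LessThan)
qed

lemma mat_trace_mult_adjoint:
  assumes "A \<in> carrier_mat d d" "B \<in> carrier_mat d d"
  shows "mat_trace (A * mat_adjoint B) = cnj (hs_inner d A B)"
proof -
  have "mat_trace (A * mat_adjoint B) = (\<Sum>i<d. \<Sum>k<d. A $$ (i, k) * cnj (B $$ (i, k)))"
    using assms by (simp add: mat_trace_def scalar_prod_def atLeast0LessThan)
  then show ?thesis
    unfolding hs_inner_def sum.cartesian_product' by (simp add: atLeast0LessThan mult.commute)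
qed

text \<open>The entries of \<open>U \<otimes> conj U\<close>, i.e. the matrix of \<open>M \<mapsto> U M U\<^sup>H\<close>
  in the basis of matrix units.\<close>

definition kron_conj :: "complex mat \<Rightarrow> nat \<times> nat \<Rightarrow> nat \<times> nat \<Rightarrow> complex" where
  "kron_conj U p q = U $$ (fst p, fst q) * cnj (U $$ (snd p, snd q))"

lemma index_mult_mult_adjoint:
  assumes U: "U \<in> carrier_mat d d" and M: "M \<in> carrier_mat d d" and p: "p \<in> index_pairs d"
  shows "(U * M * mat_adjoint U) $$ p = (\<Sum>q\<in>index_pairs d. kron_conj U p q * M $$ q)"
proof -
  obtain i j where ij: "p = (i, j)" "i < d" "j < d" using p by auto
  have "(U * M * mat_adjoint U) $$ (i, j)
      = (\<Sum>l<d. (\<Sum>k<d. U $$ (i, k) * M $$ (k, l)) * cnj (U $$ (j, l)))"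
    using U M ij by (simp add: scalar_prod_def atLeast0LessThan)
  also have "\<dots> = (\<Sum>k<d. \<Sum>l<d. kron_conj U (i, j) (k, l) * M $$ (k, l))"
    unfolding sum_distrib_right by (subst sum.swap) (simp add: kron_conj_def mult_ac)
  also have "\<dots> = (\<Sum>(k, l)\<in>index_pairs d. kron_conj U (i, j) (k, l) * M $$ (k, l))"
    by (simp add: sum.cartesian_product atLeast0LessThan)
  finally show ?thesis using ij by (simp add: case_prod_beta)
qed

lemma parseval_complete_family:
  fixes F :: "'a \<Rightarrow> 'b \<Rightarrow> complex" and c :: real
  assumes "finite P" "finite A"
    and complete: "\<And>p q. p \<in> A \<Longrightarrow> q \<in> A \<Longrightarrow>
      (\<Sum>a\<in>P. cnj (F a p) * F a q) = (if p = q then of_real c else 0)"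
  shows "(\<Sum>a\<in>P. (cmod (\<Sum>p\<in>A. cnj (F a p) * X p))\<^sup>2) = c * (\<Sum>p\<in>A. (cmod (X p))\<^sup>2)"
proof -
  have "complex_of_real (\<Sum>a\<in>P. (cmod (\<Sum>p\<in>A. cnj (F a p) * X p))\<^sup>2)
      = (\<Sum>a\<in>P. (\<Sum>p\<in>A. cnj (F a p) * X p) * cnj (\<Sum>q\<in>A. cnj (F a q) * X q))"
    by (simp only: of_real_sum complex_norm_square)
  also have "\<dots> = (\<Sum>a\<in>P. \<Sum>p\<in>A. \<Sum>q\<in>A. (cnj (F a p) * F a q) * (X p * cnj (X q)))"
    by (simp add: sum_product mult_ac)
  also have "\<dots> = (\<Sum>p\<in>A. \<Sum>q\<in>A. (\<Sum>a\<in>P. cnj (F a p) * F a q) * (X p * cnj (X q)))"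
    by (subst sum.swap) (simp add: sum.swap[of _ P] sum_distrib_right)
  also have "\<dots> = (\<Sum>p\<in>A. \<Sum>q\<in>A. (if p = q then of_real c * (X p * cnj (X q)) else 0))"
    by (intro sum.cong refl) (simp add: complete)
  also have "\<dots> = (\<Sum>p\<in>A. of_real c * (X p * cnj (X p)))"
    using \<open>finite A\<close> by simp
  also have "\<dots> = complex_of_real (c * (\<Sum>p\<in>A. (cmod (X p))\<^sup>2))"
    by (simp only: of_real_mult of_real_sum complex_norm_square sum_distrib_left)
  finally show ?thesis by (simp only: of_real_eq_iff)
qed

lemma parseval_complete_family':
  fixes F :: "'a \<Rightarrow> 'b \<Rightarrow> complex" and c :: real
  assumes "finite P" "finite A"
    and complete: "\<And>p q. p \<in> A \<Longrightarrow> q \<in> A \<Longrightarrow>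
      (\<Sum>a\<in>P. cnj (F a p) * F a q) = (if p = q then of_real c else 0)"
  shows "(\<Sum>a\<in>P. (cmod (\<Sum>p\<in>A. F a p * X p))\<^sup>2) = c * (\<Sum>p\<in>A. (cmod (X p))\<^sup>2)"
proof -
  have "cmod (\<Sum>p\<in>A. F a p * X p) = cmod (\<Sum>p\<in>A. cnj (F a p) * cnj (X p))" for a
    by (subst complex_mod_cnj[symmetric]) simp
  then show ?thesis
    using parseval_complete_family[OF assms, of "\<lambda>p. cnj (X p)"] by simp
qed

lemma cols_orthonormal:
  assumes U: "U \<in> carrier_mat d d" and unitary: "mat_adjoint U * U = 1\<^sub>m d" and "k < d" "l < d"
  shows "(\<Sum>j<d. cnj (U $$ (j, k)) * U $$ (j, l)) = (if k = l then 1 else 0)"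
proof -
  have "(\<Sum>j<d. cnj (U $$ (j, k)) * U $$ (j, l)) = (mat_adjoint U * U) $$ (k, l)"
    using U \<open>k < d\<close> \<open>l < d\<close> by (simp add: scalar_prod_def atLeast0LessThan)
  also have "\<dots> = (if k = l then 1 else 0)"
    using unitary assms by simp
  finally show ?thesis .
qed

lemma kron_conj_complete:
  assumes U: "U \<in> carrier_mat d d" and unitary: "mat_adjoint U * U = 1\<^sub>m d"
    and q: "q \<in> index_pairs d" and q': "q' \<in> index_pairs d"
  shows "(\<Sum>p\<in>index_pairs d. cnj (kron_conj U p q) * kron_conj U p q') = (if q = q' then 1 else 0)"
proof -
  obtain k l k' l' where kl: "q = (k, l)" "q' = (k', l')" "k < d" "l < d" "k' < d" "l' < d"
    using q q' by auto
  have "(\<Sum>p\<in>index_pairs d. cnj (kron_conj U p q) * kron_conj U p q')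
      = (\<Sum>j<d. cnj (U $$ (j, k)) * U $$ (j, k')) * cnj (\<Sum>i<d. cnj (U $$ (i, l)) * U $$ (i, l'))"
    by (simp add: kron_conj_def kl sum.cartesian_product' sum_product atLeast0LessThan mult_ac)
  then show ?thesis
    using cols_orthonormal[OF U unitary] kl by auto
qed

lemma hs_norm_sq_unitary_conj:
  assumes U: "U \<in> carrier_mat d d" and unitary: "mat_adjoint U * U = 1\<^sub>m d"
    and M: "M \<in> carrier_mat d d"
  shows "hs_norm_sq d (U * M * mat_adjoint U) = hs_norm_sq d M"
proof -
  have "hs_norm_sq d (U * M * mat_adjoint U)
      = (\<Sum>p\<in>index_pairs d. (cmod (\<Sum>q\<in>index_pairs d. kron_conj U p q * M $$ q))\<^sup>2)"
    unfolding hs_norm_sq_def using index_mult_mult_adjoint[OF U M] by simp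
  also have "\<dots> = hs_norm_sq d M"
    unfolding hs_norm_sq_def
    by (rule trans[OF parseval_complete_family'[where c = 1]])
      (simp_all add: kron_conj_complete[OF U unitary])
  finally show ?thesis .
qed

lemma cnj_mult_self_eq_1: "cmod z = 1 \<Longrightarrow> cnj z * z = 1"
  by (metis complex_norm_square mult.commute of_real_1 power_one)

lemma omega_power: "omega dL ^ k = cis (2 * pi * real k / real dL)"
proof -
  have "omega dL = cis (2 * pi / real dL)"
    unfolding omega_def cis_conv_exp by (simp add: mult.commute)
  then show ?thesis by (simp add: DeMoivre mult_ac)
qed

lemma cnj_omega_power_mult: "cnj (omega dL) ^ k * omega dL ^ k = 1"
  by (metis cnj_mult_self_eq_1 complex_cnj_power norm_cis omega_power)

lemma cnj_tau_mult: "cnj (tau dL) * tau dL = 1"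
  unfolding tau_def by (rule cnj_mult_self_eq_1) simp

lemma omega_power_dL: "0 < dL \<Longrightarrow> omega dL ^ dL = 1"
  by (simp add: omega_power)

lemma omega_power_inj:
  assumes "0 < dL" "j < dL" "l < dL" "omega dL ^ j = omega dL ^ l"
  shows "j = l"
  using bij_betw_roots_unity[OF \<open>0 < dL\<close>] assms(2-4)
  by (simp add: bij_betw_def inj_on_def omega_power)

lemma sum_omega_character:
  assumes "0 < dL" "j < dL" "l < dL"
  shows "(\<Sum>t\<in>{0..<dL}. (cnj (omega dL) ^ j * omega dL ^ l) ^ t) = (if j = l then of_nat dL else 0)"
proof (cases "j = l")
  case True
  then show ?thesis by (simp add: cnj_omega_power_mult)
next
  case False
  define z where "z = cnj (omega dL) ^ j * omega dL ^ l"
  have "omega dL ^ j * z = omega dL ^ l"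
    unfolding z_def using cnj_omega_power_mult[of dL j] by (simp add: mult.commute mult.left_commute)
  then have "z \<noteq> 1"
    using omega_power_inj[OF assms] False by auto
  moreover have "z ^ dL = 1"
    unfolding z_def power_mult_distrib
    by (simp flip: power_mult complex_cnj_power add: mult.commute[of _ dL] power_mult
        omega_power_dL[OF \<open>0 < dL\<close>])
  ultimately have "(\<Sum>t<dL. z ^ t) = 0"
    by (simp add: sum_gp_strict)
  then show ?thesis
    using False by (simp add: z_def atLeast0LessThan)
qed

lemma bij_betw_add_mod:
  assumes "0 < n"
  shows "bij_betw (\<lambda>s. (j + s) mod n) {0..<n} {0..<(n::nat)}"
proof -
  have inj: "inj_on (\<lambda>s. (j + s) mod n) {0..<n}"
    unfolding inj_on_def cong_def[symmetric] cong_add_lcancel_nat by (simp add: cong_def)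
  moreover have "(\<lambda>s. (j + s) mod n) ` {0..<n} = {0..<n}"
    using assms by (intro endo_inj_surj inj) auto
  ultimately show ?thesis by (simp add: bij_betw_def)
qed

lemma cnj_Dq_entry_mult:
  "cnj (Dq_entry dL x i j) * Dq_entry dL x k l =
     (if i = (j + fst x) mod dL \<and> k = (l + fst x) mod dL
      then (cnj (omega dL) ^ j * omega dL ^ l) ^ snd x else 0)"
proof -
  have "cnj (tau dL ^ (fst x * snd x) * omega dL ^ (snd x * j)) *
          (tau dL ^ (fst x * snd x) * omega dL ^ (snd x * l))
        = (cnj (tau dL) * tau dL) ^ (fst x * snd x) * (cnj (omega dL) ^ j * omega dL ^ l) ^ snd x"
    by (simp add: power_mult_distrib mult.commute[of "snd x"] power_mult mult_ac)
  then show ?thesis unfolding Dq_entry_def by (simp add: cnj_tau_mult)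
qed

lemma Dq_entry_complete:
  assumes "0 < dL" "i < dL" "j < dL" "k < dL" "l < dL"
  shows "(\<Sum>x\<in>{0..<dL} \<times> {0..<dL}. cnj (Dq_entry dL x i j) * Dq_entry dL x k l)
         = (if i = k \<and> j = l then of_nat dL else 0)"
proof -
  have "(\<Sum>x\<in>{0..<dL} \<times> {0..<dL}. cnj (Dq_entry dL x i j) * Dq_entry dL x k l)
      = (\<Sum>s\<in>{0..<dL}. \<Sum>t\<in>{0..<dL}. if i = (j + s) mod dL \<and> k = (l + s) mod dL
           then (cnj (omega dL) ^ j * omega dL ^ l) ^ t else 0)"
    by (simp add: cnj_Dq_entry_mult sum.cartesian_product' cong: if_cong)
  also have "\<dots> = (\<Sum>s\<in>{0..<dL}. if i = (j + s) mod dL \<and> k = (l + s) mod dL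
           then (\<Sum>t\<in>{0..<dL}. (cnj (omega dL) ^ j * omega dL ^ l) ^ t) else 0)"
    by (intro sum.cong refl) (auto cong: if_cong)
  also have "\<dots> = (if j = l then \<Sum>s\<in>{0..<dL}. if i = (j + s) mod dL \<and> k = (j + s) mod dL
                      then of_nat dL else 0 else 0)"
    using sum_omega_character[OF assms(1,3,5)] by (auto cong: if_cong)
  also have "\<dots> = (if j = l then \<Sum>y\<in>{0..<dL}. if i = y \<and> k = y then of_nat dL else 0 else 0)"
    using sum.reindex_bij_betw[OF bij_betw_add_mod[OF assms(1)],
        of "\<lambda>y. if i = y \<and> k = y then (of_nat dL :: complex) else 0" j]
    by auto
  also have "\<dots> = (if i = k \<and> j = l then of_nat dL else 0)"
    using assms(2) by auto
  finally show ?thesis .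
qed

lemma Dq_entry_norm_sq:
  "(cmod (Dq_entry dL c x y))\<^sup>2 = (if x = (y + fst c) mod dL then 1 else 0)"
proof -
  have "cmod (tau dL) = 1" "cmod (omega dL) = 1"
    by (simp_all add: tau_def omega_def)
  then show ?thesis
    by (simp add: Dq_entry_def norm_mult norm_power)
qed

lemma sum_Dq_entry_norm_sq:
  assumes "0 < dL"
  shows "(\<Sum>x\<in>{0..<dL}. \<Sum>y\<in>{0..<dL}. (cmod (Dq_entry dL c x y))\<^sup>2) = dL"
  using assms by (subst sum.swap) (simp add: Dq_entry_norm_sq)

lemma digit_less: "0 < dL \<Longrightarrow> digit dL n t k < dL"
  by (simp add: digit_def)

lemma mod_power_eq_if_digits_eq:
  fixes i k b :: nat
  assumes "\<forall>e<m. i div b ^ e mod b = k div b ^ e mod b"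
  shows "i mod b ^ m = k mod b ^ m"
  using assms
proof (induction m)
  case (Suc m)
  have "i mod b ^ Suc m = b ^ m * (i div b ^ m mod b) + i mod b ^ m"
    and "k mod b ^ Suc m = b ^ m * (k div b ^ m mod b) + k mod b ^ m"
    by (metis mod_mult2_eq power_Suc2)+
  with Suc show ?case by simp
qed simp

lemma digits_inj:
  assumes "i < dL ^ n" "k < dL ^ n" and digits: "\<forall>t<n. digit dL n t i = digit dL n t k"
  shows "i = k"
proof -
  have "\<forall>e<n. i div dL ^ e mod dL = k div dL ^ e mod dL"
  proof (intro allI impI)
    fix e assume "e < n"
    then have "n - 1 - (n - 1 - e) = e" by simp
    then show "i div dL ^ e mod dL = k div dL ^ e mod dL"
      using digits[rule_format, of "n - 1 - e"] \<open>e < n\<close> by (simp add: digit_def)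
  qed
  then have "i mod dL ^ n = k mod dL ^ n" by (rule mod_power_eq_if_digits_eq)
  then show ?thesis using assms by simp
qed

definition digits :: "nat \<Rightarrow> nat \<Rightarrow> nat \<Rightarrow> nat \<Rightarrow> nat" where
  "digits dL n k = (\<lambda>t\<in>{0..<n}. digit dL n t k)"

lemma bij_betw_digits:
  assumes "0 < dL"
  shows "bij_betw (digits dL n) {0..<dL ^ n} ({0..<n} \<rightarrow>\<^sub>E {0..<dL})"
proof -
  have inj: "inj_on (digits dL n) {0..<dL ^ n}"
  proof
    fix i k assume "i \<in> {0..<dL ^ n}" "k \<in> {0..<dL ^ n}" "digits dL n i = digits dL n k"
    then show "i = k"
      using digits_inj[of i dL n k] unfolding digits_def
      by (metis atLeastLessThan_iff restrict_apply' zero_le)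
  qed
  have "digits dL n ` {0..<dL ^ n} \<subseteq> {0..<n} \<rightarrow>\<^sub>E {0..<dL}"
    using assms by (auto simp: digits_def digit_less)
  moreover have "card (digits dL n ` {0..<dL ^ n}) = card ({0..<n} \<rightarrow>\<^sub>E {0..<dL})"
    using inj by (simp add: card_image card_PiE)
  ultimately have "digits dL n ` {0..<dL ^ n} = {0..<n} \<rightarrow>\<^sub>E {0..<dL}"
    by (intro card_subset_eq) (auto simp: finite_PiE)
  then show ?thesis using inj by (simp add: bij_betw_def)
qed

lemma sum_prod_digits:
  fixes g :: "nat \<Rightarrow> nat \<Rightarrow> 'a::comm_semiring_1"
  assumes "0 < dL"
  shows "(\<Sum>k\<in>{0..<dL ^ n}. \<Prod>t\<in>{0..<n}. g t (digit dL n t k))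
       = (\<Prod>t\<in>{0..<n}. \<Sum>x\<in>{0..<dL}. g t x)"
proof -
  have "(\<Sum>k\<in>{0..<dL ^ n}. \<Prod>t\<in>{0..<n}. g t (digit dL n t k))
      = (\<Sum>k\<in>{0..<dL ^ n}. \<Prod>t\<in>{0..<n}. g t (digits dL n k t))"
    by (simp add: digits_def)
  also have "\<dots> = (\<Sum>x\<in>{0..<n} \<rightarrow>\<^sub>E {0..<dL}. \<Prod>t\<in>{0..<n}. g t (x t))"
    by (rule sum.reindex_bij_betw[OF bij_betw_digits[OF assms]])
  also have "\<dots> = (\<Prod>t\<in>{0..<n}. \<Sum>x\<in>{0..<dL}. g t x)"
    by (rule prod_sum_PiE[where f = g, symmetric]) auto
  finally show ?thesis .
qed

lemma prod_if_const_zero: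
  assumes "finite A"
  shows "(\<Prod>t\<in>A. if P t then c else 0)
       = (if \<forall>t\<in>A. P t then c ^ card A else (0::'a::comm_semiring_1))"
  using assms by (cases "\<forall>t\<in>A. P t") (auto intro!: prod_zero)

lemma index_displacement:
  "i < dL ^ n \<Longrightarrow> j < dL ^ n \<Longrightarrow> displacement dL n a $$ (i, j)
     = (\<Prod>t\<in>{0..<n}. Dq_entry dL (a t) (digit dL n t i) (digit dL n t j))"
  by (simp add: displacement_def atLeast0LessThan)

lemma displacement_carrier: "displacement dL n a \<in> carrier_mat (dL ^ n) (dL ^ n)"
  by (simp add: displacement_def)

lemma displacement_zero:
  assumes "0 < dL"
  shows "displacement dL n (\<lambda>t\<in>{0..<n}. (0, 0)) = 1\<^sub>m (dL ^ n)"
proof (rule eq_matI)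
  fix i j assume "i < dim_row (1\<^sub>m (dL ^ n))" "j < dim_col (1\<^sub>m (dL ^ n))"
  then have ij: "i < dL ^ n" "j < dL ^ n" by simp_all
  have "displacement dL n (\<lambda>t\<in>{0..<n}. (0, 0)) $$ (i, j)
      = (\<Prod>t\<in>{0..<n}. if digit dL n t i = digit dL n t j then 1 else 0)"
    using ij by (simp add: index_displacement Dq_entry_def digit_less[OF assms] cong: if_cong)
  also have "\<dots> = 1\<^sub>m (dL ^ n) $$ (i, j)"
    using ij digits_inj[OF ij] by (auto simp: prod_if_const_zero)
  finally show "displacement dL n (\<lambda>t\<in>{0..<n}. (0, 0)) $$ (i, j) = 1\<^sub>m (dL ^ n) $$ (i, j)" .
qed (simp_all add: displacement_def)

lemma displacement_complete:
  assumes "0 < dL" and p: "p \<in> index_pairs (dL ^ n)" and q: "q \<in> index_pairs (dL ^ n)"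
  shows "(\<Sum>a\<in>phase_points dL n. cnj (displacement dL n a $$ p) * displacement dL n a $$ q)
         = (if p = q then of_nat (dL ^ n) else 0)"
proof -
  obtain i j k l where pq: "p = (i, j)" "q = (k, l)" "i < dL ^ n" "j < dL ^ n" "k < dL ^ n" "l < dL ^ n"
    using p q by auto
  let ?f = "\<lambda>t x. cnj (Dq_entry dL x (digit dL n t i) (digit dL n t j)) *
                  Dq_entry dL x (digit dL n t k) (digit dL n t l)"
  have "(\<Sum>a\<in>phase_points dL n. cnj (displacement dL n a $$ p) * displacement dL n a $$ q)
      = (\<Sum>a\<in>{0..<n} \<rightarrow>\<^sub>E {0..<dL} \<times> {0..<dL}. \<Prod>t\<in>{0..<n}. ?f t (a t))"
    unfolding phase_points_def using pq by (simp add: index_displacement prod.distrib)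
  also have "\<dots> = (\<Prod>t\<in>{0..<n}. \<Sum>x\<in>{0..<dL} \<times> {0..<dL}. ?f t x)"
    by (subst prod_sum_PiE) auto
  also have "\<dots> = (\<Prod>t\<in>{0..<n}. if digit dL n t i = digit dL n t k \<and> digit dL n t j = digit dL n t l
                                 then of_nat dL else 0)"
    by (intro prod.cong refl Dq_entry_complete) (simp_all add: assms(1) digit_less)
  also have "\<dots> = (if p = q then of_nat (dL ^ n) else 0)"
    using digits_inj[of i dL n k] digits_inj[of j dL n l] pq by (auto simp: prod_if_const_zero)
  finally show ?thesis .
qed

lemma hs_norm_sq_displacement:
  assumes "0 < dL"
  shows "hs_norm_sq (dL ^ n) (displacement dL n a) = dL ^ n"
proof -
  let ?g = "\<lambda>t x y. (cmod (Dq_entry dL (a t) x y))\<^sup>2"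
  have "hs_norm_sq (dL ^ n) (displacement dL n a)
      = (\<Sum>i\<in>{0..<dL ^ n}. \<Sum>j\<in>{0..<dL ^ n}.
           \<Prod>t\<in>{0..<n}. ?g t (digit dL n t i) (digit dL n t j))"
    unfolding hs_norm_sq_def sum.cartesian_product'
    by (intro sum.cong refl) (simp add: index_displacement prod_power_distrib flip: prod_norm)
  also have "\<dots> = (\<Sum>i\<in>{0..<dL ^ n}. \<Prod>t\<in>{0..<n}. \<Sum>y\<in>{0..<dL}. ?g t (digit dL n t i) y)"
    by (intro sum.cong refl sum_prod_digits[OF assms])
  also have "\<dots> = (\<Prod>t\<in>{0..<n}. \<Sum>x\<in>{0..<dL}. \<Sum>y\<in>{0..<dL}. ?g t x y)"
    by (rule sum_prod_digits[OF assms])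
  also have "\<dots> = dL ^ n"
    using sum_Dq_entry_norm_sq[OF assms] by simp
  finally show ?thesis .
qed

lemma finite_phase_points: "finite (phase_points dL n)"
  by (simp add: phase_points_def finite_PiE)

lemma card_phase_points: "card (phase_points dL n) = (dL ^ n)\<^sup>2"
  by (simp add: phase_points_def card_PiE power2_eq_square power_mult_distrib)

lemma origin_in_phase_points: "0 < dL \<Longrightarrow> (\<lambda>t\<in>{0..<n}. (0, 0)) \<in> phase_points dL n"
  by (auto simp: phase_points_def)

lemma hs_inner_self: "hs_inner d A A = of_real (hs_norm_sq d A)"
  unfolding hs_inner_def hs_norm_sq_def of_real_sum complex_norm_square by (simp add: mult.commute)

lemma mat_trace_mult_adjoint_self:
  "U \<in> carrier_mat d d \<Longrightarrow> mat_trace (U * mat_adjoint U) = of_real (hs_norm_sq d U)"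
  by (simp add: mat_trace_mult_adjoint hs_inner_self)

lemma parseval_displacement:
  assumes "0 < dL"
  shows "(\<Sum>a\<in>phase_points dL n. (cmod (hs_inner (dL ^ n) (displacement dL n a) M))\<^sup>2)
       = real (dL ^ n) * hs_norm_sq (dL ^ n) M"
  unfolding hs_inner_def hs_norm_sq_def
  by (rule parseval_complete_family) (simp_all add: finite_phase_points displacement_complete[OF assms])

lemma frakC_column_form:
  assumes U: "U \<in> carrier_mat (dL ^ n) (dL ^ n)"
  shows "frakC dL n U a b
       = hs_inner (dL ^ n) (displacement dL n a) (U * displacement dL n b * mat_adjoint U) / of_nat (dL ^ n)"
proof -
  let ?A = "mat_adjoint (displacement dL n a)" and ?B = "displacement dL n b"
  have A: "?A \<in> carrier_mat (dL ^ n) (dL ^ n)" and B: "?B \<in> carrier_mat (dL ^ n) (dL ^ n)"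
    and V: "mat_adjoint U \<in> carrier_mat (dL ^ n) (dL ^ n)"
    using U by (simp_all add: mat_adjoint_carrier displacement_carrier)
  have "?A * U * ?B * mat_adjoint U = ?A * (U * ?B * mat_adjoint U)"
    by (simp add: assoc_mult_mat[OF A U B] assoc_mult_mat[OF A mult_carrier_mat[OF U B] V])
  then show ?thesis
    unfolding frakC_def
    using mat_trace_adjoint_mult[OF displacement_carrier mult_carrier_mat[OF mult_carrier_mat[OF U B] V]]
    by simp
qed

lemma frakC_row_form:
  assumes U: "U \<in> carrier_mat (dL ^ n) (dL ^ n)"
  shows "frakC dL n U a b
       = cnj (hs_inner (dL ^ n) (displacement dL n b) (mat_adjoint U * displacement dL n a * U))
         / of_nat (dL ^ n)"
proof -
  let ?D = "displacement dL n a" and ?B = "displacement dL n b" and ?V = "mat_adjoint U"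
  have D: "?D \<in> carrier_mat (dL ^ n) (dL ^ n)" and B: "?B \<in> carrier_mat (dL ^ n) (dL ^ n)"
    and A: "mat_adjoint ?D \<in> carrier_mat (dL ^ n) (dL ^ n)"
    and V: "?V \<in> carrier_mat (dL ^ n) (dL ^ n)"
    using U by (simp_all add: mat_adjoint_carrier displacement_carrier)
  have AU: "mat_adjoint ?D * U \<in> carrier_mat (dL ^ n) (dL ^ n)" using A U by simp
  have "mat_trace (mat_adjoint ?D * U * ?B * ?V) = mat_trace ((mat_adjoint ?D * U) * (?B * ?V))"
    by (simp add: assoc_mult_mat[OF AU B V])
  also have "\<dots> = mat_trace ((?B * ?V) * (mat_adjoint ?D * U))"
    using AU B V by (intro mat_trace_mult_comm) auto
  also have "\<dots> = mat_trace (?B * mat_adjoint (?V * ?D * U))"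
    by (simp add: assoc_mult_mat[OF B V AU] mat_adjoint_mult[OF mult_carrier_mat[OF V D] U]
        mat_adjoint_mult[OF V D] mat_adjoint_adjoint)
  also have "\<dots> = cnj (hs_inner (dL ^ n) ?B (?V * ?D * U))"
    using U D V by (intro mat_trace_mult_adjoint B) auto
  finally show ?thesis unfolding frakC_def by simp
qed

lemma sum_frakD_column:
  assumes "0 < dL" "U \<in> carrier_mat (dL ^ n) (dL ^ n)"
  shows "(\<Sum>a\<in>phase_points dL n. frakD dL n U a b)
       = hs_norm_sq (dL ^ n) (U * displacement dL n b * mat_adjoint U) / dL ^ n"
  using parseval_displacement[OF assms(1)] assms(1)
  by (simp add: frakD_def frakC_column_form[OF assms(2)] norm_divide norm_power
      power_divide flip: sum_divide_distrib) (simp add: power2_eq_square)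

lemma sum_frakD_row:
  assumes "0 < dL" "U \<in> carrier_mat (dL ^ n) (dL ^ n)"
  shows "(\<Sum>b\<in>phase_points dL n. frakD dL n U a b)
       = hs_norm_sq (dL ^ n) (mat_adjoint U * displacement dL n a * U) / dL ^ n"
  using parseval_displacement[OF assms(1)] assms(1)
  by (simp add: frakD_def frakC_row_form[OF assms(2)] norm_divide norm_power
      power_divide flip: sum_divide_distrib) (simp add: power2_eq_square)

lemma bistochastic_if_unitary:
  assumes "0 < dL" and U: "U \<in> carrier_mat (dL ^ n) (dL ^ n)"
    and right: "U * mat_adjoint U = 1\<^sub>m (dL ^ n)"
  shows "bistochastic (phase_points dL n) (frakD dL n U)"
proof -
  have left: "mat_adjoint U * U = 1\<^sub>m (dL ^ n)"
    using mat_mult_left_right_inverse[OF U mat_adjoint_carrier[OF U] right] .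
  have V: "mat_adjoint U \<in> carrier_mat (dL ^ n) (dL ^ n)"
    and V_left: "mat_adjoint (mat_adjoint U) * mat_adjoint U = 1\<^sub>m (dL ^ n)"
    using U right by (simp_all add: mat_adjoint_carrier mat_adjoint_adjoint)
  have "(\<Sum>a\<in>phase_points dL n. frakD dL n U a b) = 1" for b
    using \<open>0 < dL\<close> by (simp add: sum_frakD_column[OF _ U] hs_norm_sq_unitary_conj[OF U left]
        displacement_carrier hs_norm_sq_displacement)
  moreover have "(\<Sum>b\<in>phase_points dL n. frakD dL n U a b) = 1" for a
    using \<open>0 < dL\<close> hs_norm_sq_unitary_conj[OF V V_left displacement_carrier]
    by (simp add: sum_frakD_row[OF _ U] mat_adjoint_adjoint hs_norm_sq_displacement)
  ultimately show ?thesis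
    unfolding bistochastic_def by (simp add: frakD_def)
qed

lemma sum_sum_norm_sq_kron_conj:
  "(\<Sum>p\<in>index_pairs d. \<Sum>q\<in>index_pairs d. (cmod (kron_conj U p q))\<^sup>2) = (hs_norm_sq d U)\<^sup>2"
proof -
  let ?f = "\<lambda>j k. (cmod (U $$ (j, k)))\<^sup>2"
  have "(\<Sum>p\<in>index_pairs d. \<Sum>q\<in>index_pairs d. (cmod (kron_conj U p q))\<^sup>2)
      = (\<Sum>j<d. \<Sum>i<d. \<Sum>k<d. \<Sum>l<d. ?f j k * ?f i l)"
    by (simp add: sum.cartesian_product' kron_conj_def norm_mult power_mult_distrib atLeast0LessThan)
  also have "\<dots> = (hs_norm_sq d U)\<^sup>2"
    by (simp add: hs_norm_sq_def sum.cartesian_product' power2_eq_square sum_product atLeast0LessThan)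
  finally show ?thesis .
qed

lemma sum_hs_norm_sq_conj_displacement:
  assumes "0 < dL" and U: "U \<in> carrier_mat (dL ^ n) (dL ^ n)"
  shows "(\<Sum>b\<in>phase_points dL n. hs_norm_sq (dL ^ n) (U * displacement dL n b * mat_adjoint U))
       = real (dL ^ n) * (hs_norm_sq (dL ^ n) U)\<^sup>2"
proof -
  have "(\<Sum>b\<in>phase_points dL n. hs_norm_sq (dL ^ n) (U * displacement dL n b * mat_adjoint U))
      = (\<Sum>p\<in>index_pairs (dL ^ n). \<Sum>b\<in>phase_points dL n.
           (cmod (\<Sum>q\<in>index_pairs (dL ^ n). displacement dL n b $$ q * kron_conj U p q))\<^sup>2)"
    unfolding hs_norm_sq_def
    by (subst sum.swap) (simp add: index_mult_mult_adjoint[OF U displacement_carrier] mult.commute)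
  also have "\<dots> = (\<Sum>p\<in>index_pairs (dL ^ n).
                      real (dL ^ n) * (\<Sum>q\<in>index_pairs (dL ^ n). (cmod (kron_conj U p q))\<^sup>2))"
    by (intro sum.cong refl parseval_complete_family')
      (simp_all add: finite_phase_points displacement_complete[OF \<open>0 < dL\<close>])
  also have "\<dots> = real (dL ^ n) * (hs_norm_sq (dL ^ n) U)\<^sup>2"
    by (simp add: sum_sum_norm_sq_kron_conj flip: sum_distrib_left)
  finally show ?thesis .
qed

lemma one_mat_if_hs_norm_sq_trace:
  assumes A: "A \<in> carrier_mat d d" and norm: "hs_norm_sq d A = d" and trace: "Re (mat_trace A) = d"
  shows "A = 1\<^sub>m d"
proof -
  have diag: "(\<Sum>p\<in>index_pairs d. if fst p = snd p then f p else 0) = (\<Sum>i<d. f (i, i))"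
    for f :: "nat \<times> nat \<Rightarrow> real"
    by (simp add: sum.cartesian_product' atLeast0LessThan)
  have "(cmod (A $$ p - 1\<^sub>m d $$ p))\<^sup>2
      = (cmod (A $$ p))\<^sup>2 - 2 * (if fst p = snd p then Re (A $$ p) else 0)
        + (if fst p = snd p then 1 else 0)"
    if "p \<in> index_pairs d" for p
    using that by (auto simp: cmod_power2 power2_diff)
  then have "(\<Sum>p\<in>index_pairs d. (cmod (A $$ p - 1\<^sub>m d $$ p))\<^sup>2)
      = hs_norm_sq d A - 2 * Re (mat_trace A) + d"
    using A by (simp add: sum.distrib sum_subtractf hs_norm_sq_def diag mat_trace_def
        sum_distrib_left[symmetric] flip: Re_sum)
  then have "(\<Sum>p\<in>index_pairs d. (cmod (A $$ p - 1\<^sub>m d $$ p))\<^sup>2) = 0"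
    using norm trace by simp
  then have "A $$ p = 1\<^sub>m d $$ p" if "p \<in> index_pairs d" for p
    using that by (subst (asm) sum_nonneg_eq_0_iff) auto
  then show ?thesis
    using A by (intro eq_matI) auto
qed

lemma unitary_if_bistochastic:
  assumes "0 < dL" and U: "U \<in> carrier_mat (dL ^ n) (dL ^ n)"
    and bs: "bistochastic (phase_points dL n) (frakD dL n U)"
  shows "U * mat_adjoint U = 1\<^sub>m (dL ^ n)"
proof -
  let ?d = "dL ^ n"
  have col: "hs_norm_sq ?d (U * displacement dL n b * mat_adjoint U) = ?d"
    if "b \<in> phase_points dL n" for b
    using bs that \<open>0 < dL\<close> unfolding bistochastic_def by (simp add: sum_frakD_column[OF _ U])
  have "hs_norm_sq ?d (U * mat_adjoint U) = ?d"
    using col[OF origin_in_phase_points[OF \<open>0 < dL\<close>]] U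
    by (simp add: displacement_zero[OF \<open>0 < dL\<close>])
  moreover have "hs_norm_sq ?d U = ?d"
  proof -
    have "real ?d * (hs_norm_sq ?d U)\<^sup>2
        = (\<Sum>b\<in>phase_points dL n. hs_norm_sq ?d (U * displacement dL n b * mat_adjoint U))"
      by (rule sum_hs_norm_sq_conj_displacement[OF \<open>0 < dL\<close> U, symmetric])
    also have "\<dots> = (\<Sum>b\<in>phase_points dL n. real ?d)"
      using col by (intro sum.cong) auto
    also have "\<dots> = real ?d * (real ?d)\<^sup>2"
      by (simp add: card_phase_points)
    finally have "real ?d * (hs_norm_sq ?d U)\<^sup>2 = real ?d * (real ?d)\<^sup>2" .
    moreover have "real ?d > 0"
      using \<open>0 < dL\<close> by simp
    ultimately have "(hs_norm_sq ?d U)\<^sup>2 = (real ?d)\<^sup>2"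
      by (metis mult_cancel_left less_irrefl)
    then show ?thesis
      by (simp add: hs_norm_sq_def sum_nonneg)
  qed
  ultimately show ?thesis
    using U by (intro one_mat_if_hs_norm_sq_trace) (auto simp: mat_trace_mult_adjoint_self)
qed

lemma unitary_mat_iff_right_inverse:
  assumes U: "U \<in> carrier_mat d d"
  shows "unitary_mat U \<longleftrightarrow> U * mat_adjoint U = 1\<^sub>m d"
proof
  assume "unitary_mat U"
  then obtain d' where "U \<in> carrier_mat d' d'" and "U * mat_adjoint U = 1\<^sub>m d'"
    unfolding unitary_mat_def by blast
  with U show "U * mat_adjoint U = 1\<^sub>m d" by auto
next
  assume right: "U * mat_adjoint U = 1\<^sub>m d"
  then have "mat_adjoint U * U = 1\<^sub>m d"
    by (rule mat_mult_left_right_inverse[OF U mat_adjoint_carrier[OF U]])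
  with U right show "unitary_mat U"
    unfolding unitary_mat_def by blast
qed

theorem lemma1:
  fixes dL n :: nat and U :: "complex mat"
  assumes "dL \<ge> 2" and "n \<ge> 1"
    and "U \<in> carrier_mat (dL ^ n) (dL ^ n)"
  shows "bistochastic (phase_points dL n) (frakD dL n U) \<longleftrightarrow> unitary_mat U"
proof -
  have "0 < dL" using assms(1) by simp
  then show ?thesis
    using bistochastic_if_unitary unitary_if_bistochastic unitary_mat_iff_right_inverse[OF assms(3)]
      assms(3) by blast
qed

end
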